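(* Let $\mathcal{X},\mathcal{Y}$ be finite sets, $p(X,Y)$ a fully supported probability distribution on $\mathcal{X}\times\mathcal{Y}$, and $0\le\lambda\le I(X;Y)$. For $\kappa_{\mathcal{X}}\in C(\mathcal{X},\mathbb{N})$, $\kappa_{\mathcal{Y}}\in C(\mathcal{Y},\mathbb{N})$, let $\kappa=\kappa_{\mathcal{X}}\otimes\kappa_{\mathcal{Y}}\in C(\mathcal{X}\times\mathcal{Y},\mathbb{N}\times\mathbb{N})$, $\kappa(t_X,t_Y|x,y)=\kappa_{\mathcal{X}}(t_X|x)\kappa_{\mathcal{Y}}(t_Y|y)$, and let $q(x,y,t_X,t_Y)=p(x,y)\kappa_{\mathcal{X}}(t_X|x)\kappa_{\mathcal{Y}}(t_Y|y)$. Consider: (A) minimise $I_\kappa(X,Y;T)$, with $T=(T_X,T_Y)$, over all such split channels $\kappa=\kappa_{\mathcal{X}}\otimes\kappa_{\mathcal{Y}}$ subject to $D(\kappa(p(X,Y))\|\kappa(p(X)p(Y)))=\lambda$; (S) minimise $I_q(X;T_X)+I_q(Y;T_Y)$ over pairs $(q(T_X|X),q(T_Y|Y))=(\kappa_{\mathcal{X}},\kappa_{\mathcal{Y}})$ subject to $I_q(T_X;T_Y)\ge\lambda$. Then: (i) in (S), replacing the constraint $I_q(T_X;T_Y)\ge\lambda$ by $I_q(T_X;T_Y)=\lambda$ does not change the set of solutions; (ii) the sets of solutions of (A) and (S) are identical (identifying $\kappa_{\mathcal{X}}\otimes\kappa_{\mathcal{Y}}$ with the pair $(\kappa_{\ma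thcal{X}},\kappa_{\mathcal{Y}})$).
   Context: For sets $\mathcal{A},\mathcal{B}$, $C(\mathcal{A},\mathcal{B})$ denotes the set of channels (conditional probabilities) from $\mathcal{A}$ to $\mathcal{B}$. For a channel $\kappa$ and a distribution $r$ on its input space, $\kappa(r)$ denotes the output distribution $\sum_a\kappa(\cdot|a)r(a)$. $I_\kappa(X,Y;T)$ is computed from $p(x,y)\kappa(t|x,y)$; $D$ is the Kullback–Leibler divergence; $p(X),p(Y)$ are the marginals of $p(X,Y)$. *)

theory Defs
  imports "HOL-Analysis.Analysis"
begin

text \<open>Probability mass functions are real-valued functions; logarithms are natural
  (the base only rescales all information quantities and lambda consistently).\<close>

definition channel :: "('a \<Rightarrow> 'b \<Rightarrow> real) \<Rightarrow> bool" where
  "channel k \<longleftrightarrow> (\<forall>a b. 0 \<le> k a b) \<and> (\<forall>a. (k a has_sum 1) UNIV)"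

definition marg1 :: "('a \<Rightarrow> 'b \<Rightarrow> real) \<Rightarrow> 'a \<Rightarrow> real" where
  "marg1 r a = (\<Sum>\<^sub>\<infinity>b. r a b)"

definition marg2 :: "('a \<Rightarrow> 'b \<Rightarrow> real) \<Rightarrow> 'b \<Rightarrow> real" where
  "marg2 r b = (\<Sum>\<^sub>\<infinity>a. r a b)"

text \<open>Mutual information of a joint distribution r(A,B) (convention 0 log 0 = 0,
  which holds since 0 * ln _ = 0).\<close>
definition mutual_info :: "('a \<Rightarrow> 'b \<Rightarrow> real) \<Rightarrow> real" where
  "mutual_info r = infsum (\<lambda>(a,b). r a b * ln (r a b / (marg1 r a * marg2 r b))) UNIV"

definition kl_div :: "('a \<Rightarrow> real) \<Rightarrow> ('a \<Rightarrow> real) \<Rightarrow> real" where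
  "kl_div P Q = infsum (\<lambda>a. P a * ln (P a / Q a)) UNIV"

definition push_split ::
  "('x::finite \<Rightarrow> 'y::finite \<Rightarrow> real) \<Rightarrow> ('x \<Rightarrow> 'a \<Rightarrow> real) \<Rightarrow> ('y \<Rightarrow> 'b \<Rightarrow> real)
     \<Rightarrow> 'a \<times> 'b \<Rightarrow> real" where
  "push_split r kX kY = (\<lambda>(tx,ty). \<Sum>x\<in>UNIV. \<Sum>y\<in>UNIV. kX x tx * kY y ty * r x y)"

definition qdist ::
  "('x \<Rightarrow> 'y \<Rightarrow> real) \<Rightarrow> ('x \<Rightarrow> nat \<Rightarrow> real) \<Rightarrow> ('y \<Rightarrow> nat \<Rightarrow> real)
     \<Rightarrow> 'x \<Rightarrow> 'y \<Rightarrow> nat \<Rightarrow> nat \<Rightarrow> real" where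
  "qdist p kX kY x y tx ty = p x y * kX x tx * kY y ty"

definition objA :: "('x::finite \<Rightarrow> 'y::finite \<Rightarrow> real) \<Rightarrow> ('x \<Rightarrow> nat \<Rightarrow> real) \<Rightarrow> ('y \<Rightarrow> nat \<Rightarrow> real) \<Rightarrow> real" where
  "objA p kX kY = mutual_info (\<lambda>(x,y) (tx,ty). qdist p kX kY x y tx ty)"

definition feasA :: "('x::finite \<Rightarrow> 'y::finite \<Rightarrow> real) \<Rightarrow> real \<Rightarrow> ('x \<Rightarrow> nat \<Rightarrow> real) \<Rightarrow> ('y \<Rightarrow> nat \<Rightarrow> real) \<Rightarrow> bool" where
  "feasA p lam kX kY \<longleftrightarrow> channel kX \<and> channel kY \<and>
     kl_div (push_split p kX kY) (push_split (\<lambda>x y. marg1 p x * marg2 p y) kX kY) = lam"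

definition objS :: "('x::finite \<Rightarrow> 'y::finite \<Rightarrow> real) \<Rightarrow> ('x \<Rightarrow> nat \<Rightarrow> real) \<Rightarrow> ('y \<Rightarrow> nat \<Rightarrow> real) \<Rightarrow> real" where
  "objS p kX kY =
     mutual_info (\<lambda>x tx. \<Sum>y\<in>UNIV. \<Sum>\<^sub>\<infinity>ty. qdist p kX kY x y tx ty)
   + mutual_info (\<lambda>y ty. \<Sum>x\<in>UNIV. \<Sum>\<^sub>\<infinity>tx. qdist p kX kY x y tx ty)"

definition info_TT :: "('x::finite \<Rightarrow> 'y::finite \<Rightarrow> real) \<Rightarrow> ('x \<Rightarrow> nat \<Rightarrow> real) \<Rightarrow> ('y \<Rightarrow> nat \<Rightarrow> real) \<Rightarrow> real" where
  "info_TT p kX kY = mutual_info (\<lambda>tx ty. \<Sum>x\<in>UNIV. \<Sum>y\<in>UNIV. qdist p kX kY x y tx ty)"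

definition feasS_ge :: "('x::finite \<Rightarrow> 'y::finite \<Rightarrow> real) \<Rightarrow> real \<Rightarrow> ('x \<Rightarrow> nat \<Rightarrow> real) \<Rightarrow> ('y \<Rightarrow> nat \<Rightarrow> real) \<Rightarrow> bool" where
  "feasS_ge p lam kX kY \<longleftrightarrow> channel kX \<and> channel kY \<and> info_TT p kX kY \<ge> lam"

definition feasS_eq :: "('x::finite \<Rightarrow> 'y::finite \<Rightarrow> real) \<Rightarrow> real \<Rightarrow> ('x \<Rightarrow> nat \<Rightarrow> real) \<Rightarrow> ('y \<Rightarrow> nat \<Rightarrow> real) \<Rightarrow> bool" where
  "feasS_eq p lam kX kY \<longleftrightarrow> channel kX \<and> channel kY \<and> info_TT p kX kY = lam"

definition is_solution :: "('a \<Rightarrow> 'b \<Rightarrow> bool) \<Rightarrow> ('a \<Rightarrow> 'b \<Rightarrow> real) \<Rightarrow> 'a \<Rightarrow> 'b \<Rightarrow> bool" where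
  "is_solution feas obj a b \<longleftrightarrow> feas a b \<and> (\<forall>a' b'. feas a' b' \<longrightarrow> obj a b \<le> obj a' b')"

end

theory Submission
  imports Defs
begin

text \<open>Since \<open>T\<^sub>X - X - Y - T\<^sub>Y\<close> is a Markov chain, the chain rule gives
  \<open>I(X,Y;T) = I(X;T\<^sub>X) + I(Y;T\<^sub>Y) - I(T\<^sub>X;T\<^sub>Y)\<close>, and the divergence in (A)
  between the images of \<open>p(X,Y)\<close> and \<open>p(X)p(Y)\<close> is exactly \<open>I(T\<^sub>X;T\<^sub>Y)\<close>.
  So the feasible set of (A) is that of (S) with equality constraint, on which the two
  objectives differ by the constant \<open>\<lambda>\<close>; this reduces (ii) to (i).

  For (i), let \<open>\<kappa>\<^sub>X\<close> be followed by an erasure channel which keeps its output with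
  probability \<open>s\<close> and otherwise emits a fresh symbol. This scales both \<open>I(X;T\<^sub>X)\<close> and
  \<open>I(T\<^sub>X;T\<^sub>Y)\<close> by \<open>s\<close>. If \<open>I(T\<^sub>X;T\<^sub>Y) > \<lambda> \<ge> 0\<close> then \<open>I(X;T\<^sub>X) > 0\<close>,
  because \<open>I(X;T\<^sub>X) = 0\<close> makes \<open>T\<^sub>X\<close> independent of \<open>X\<close> and hence of \<open>T\<^sub>Y\<close>; so \<open>s = \<lambda> / I(T\<^sub>X;T\<^sub>Y)\<close>
  gives a strictly better point with \<open>I(T\<^sub>X;T\<^sub>Y) = \<lambda>\<close>.\<close>

section \<open>Infinite sums\<close>

lemma has_sum_diff:
  fixes f g :: "'i \<Rightarrow> 'a::topological_ab_group_add"
  assumes "(f has_sum a) A" and "(g has_sum b) A"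
  shows "((\<lambda>x. f x - g x) has_sum (a - b)) A"
proof -
  have "((\<lambda>x. - g x) has_sum - b) A"
    using assms(2) by (simp add: has_sum_uminus)
  from has_sum_add[OF assms(1) this] show ?thesis by simp
qed

lemma has_sum_sum:
  fixes f :: "'i \<Rightarrow> 'a \<Rightarrow> 'b::topological_comm_monoid_add"
  assumes "finite I" and "\<And>i. i \<in> I \<Longrightarrow> (f i has_sum s i) A"
  shows "((\<lambda>x. \<Sum>i\<in>I. f i x) has_sum (\<Sum>i\<in>I. s i)) A"
  using assms
proof (induction I rule: finite_induct)
  case (insert i I)
  then show ?case
    by (simp add: has_sum_add)
qed simp

lemma has_sum_Sigma_finite:
  fixes f :: "'a::finite \<times> 'b \<Rightarrow> 'c::topological_comm_monoid_add"
  assumes "\<And>a. ((\<lambda>b. f (a, b)) has_sum g a) UNIV"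
  shows "(f has_sum (\<Sum>a\<in>UNIV. g a)) UNIV"
proof -
  have "(f has_sum (\<Sum>a\<in>UNIV. g a)) (\<Union>a\<in>UNIV. Pair a ` UNIV)"
  proof (rule sum_has_sum)
    show "(f has_sum g a) (Pair a ` UNIV)" for a
      using assms[of a] by (subst has_sum_reindex) (auto simp: inj_on_def o_def)
  qed auto
  moreover have "(\<Union>a\<in>UNIV. Pair a ` (UNIV :: 'b set)) = UNIV" by auto
  ultimately show ?thesis by metis
qed

lemma has_sum_Sigma_weighted:
  fixes h :: "'a \<Rightarrow> real" and w :: "'a \<Rightarrow> 'b \<Rightarrow> real"
  assumes w_nonneg: "\<And>a b. 0 \<le> w a b"
    and w_sum: "\<And>a. (w a has_sum W a) UNIV"
    and hW_sum: "((\<lambda>a. h a * W a) has_sum S) UNIV"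
  shows "((\<lambda>(a, b). h a * w a b) has_sum S) UNIV"
proof -
  have W_nonneg: "0 \<le> W a" for a
    using w_sum[of a] by (rule has_sum_nonneg) (simp add: w_nonneg)
  have "(\<lambda>a. norm (h a * W a)) summable_on UNIV"
    using hW_sum[THEN has_sum_imp_summable] by (rule summable_on_iff_abs_summable_on_real[THEN iffD1])
  then have abs_hW: "(\<lambda>a. \<bar>h a\<bar> * W a) summable_on UNIV"
    using W_nonneg by (simp add: abs_mult)
  have abs_rows: "((\<lambda>b. \<bar>h a\<bar> * w a b) has_sum \<bar>h a\<bar> * W a) UNIV" for a
    using w_sum by (rule has_sum_cmult_right)
  have rows: "((\<lambda>b. h a * w a b) has_sum h a * W a) UNIV" for a
    using w_sum by (rule has_sum_cmult_right)
  have abs_summable: "(\<lambda>(a, b). \<bar>h a\<bar> * w a b) summable_on UNIV \<times> UNIV"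
    by (rule summable_on_SigmaI[where g = "\<lambda>a. \<bar>h a\<bar> * W a"])
       (simp_all add: abs_rows abs_hW w_nonneg)
  have norm_eq: "(\<lambda>(a, b). \<bar>h a\<bar> * w a b) = (\<lambda>u. norm ((\<lambda>(a, b). h a * w a b) u))"
    using w_nonneg by (auto simp: abs_mult)
  have summable: "(\<lambda>(a, b). h a * w a b) summable_on UNIV \<times> UNIV"
    using abs_summable unfolding norm_eq by (rule abs_summable_summable)
  have "((\<lambda>(a, b). h a * w a b) has_sum S) (UNIV \<times> UNIV)"
    by (rule has_sum_SigmaI[OF _ hW_sum summable]) (simp add: rows)
  then show ?thesis by simp
qed

lemma has_sum_reindex_inj_neutral:
  fixes f :: "'i \<Rightarrow> 'a::{comm_monoid_add, topological_space}"
  assumes "inj g" and "\<And>z. z \<notin> range g \<Longrightarrow> f' z = 0" and "\<And>i. f' (g i) = f i"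
    and "(f has_sum S) UNIV"
  shows "(f' has_sum S) UNIV"
proof -
  have "(f' has_sum S) (range g)"
    using assms(1,3,4) by (subst has_sum_reindex) (simp_all add: o_def)
  then show ?thesis
    by (rule has_sum_cong_neutral[THEN iffD1, rotated -1]) (use assms(2) in auto)
qed

lemma has_sum_case_nat:
  fixes f :: "nat \<Rightarrow> 'a::topological_comm_monoid_add"
  assumes "(f has_sum S) UNIV"
  shows "(case_nat c f has_sum c + S) UNIV"
proof -
  have "(case_nat c f has_sum S) (range Suc)"
    using assms by (subst has_sum_reindex) (simp_all add: o_def)
  then have "(case_nat c f has_sum case_nat c f 0 + S) (insert 0 (range Suc))"
    by (rule has_sum_insert[rotated]) simp
  moreover have "insert 0 (range Suc) = UNIV"
    using not0_implies_Suc by blast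
  ultimately show ?thesis by simp
qed

section \<open>Relative entropy\<close>

lemma diff_le_mult_ln_div:
  fixes P Q :: real
  assumes "0 \<le> P" and "0 \<le> Q" and "0 < P \<Longrightarrow> 0 < Q"
  shows "P - Q \<le> P * ln (P / Q)" and "P * ln (P / Q) = P - Q \<longleftrightarrow> P = Q"
proof -
  have "P - Q \<le> P * ln (P / Q) \<and> (P * ln (P / Q) = P - Q \<longleftrightarrow> P = Q)"
  proof (cases "P = 0")
    case False
    then have P: "0 < P" and Q: "0 < Q" using assms by auto
    define e where "e = Q / P - 1 - ln (Q / P)"
    have excess: "P * ln (P / Q) - (P - Q) = P * e"
      using P Q by (simp add: e_def ln_div field_simps)
    have "0 \<le> e"
      using ln_le_minus_one[of "Q / P"] P Q by (simp add: e_def)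
    moreover have "e = 0 \<longleftrightarrow> P = Q"
      using P Q ln_eq_minus_one[of "Q / P"] by (auto simp: e_def)
    ultimately show ?thesis
      using P excess mult_nonneg_nonneg[of P e] by (smt (verit) mult_eq_0_iff)
  qed (use assms in auto)
  then show "P - Q \<le> P * ln (P / Q)" and "P * ln (P / Q) = P - Q \<longleftrightarrow> P = Q"
    by auto
qed

lemma abs_mult_ln_div_le:
  fixes r s C :: real
  assumes "0 \<le> r" and "0 \<le> s" and "0 < C" and "r \<le> C * s"
  shows "\<bar>r * ln (r / s)\<bar> \<le> r * \<bar>ln C\<bar> + r + s"
proof (cases "r = 0")
  case False
  then have r: "0 < r" using assms by simp
  then have s: "0 < s" using assms by (smt (verit) mult_nonneg_nonpos)
  have "ln (r / s) \<le> ln C"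
    using r s assms by (subst ln_le_cancel_iff) (auto simp: field_simps)
  then have "r * ln (r / s) \<le> r * \<bar>ln C\<bar>"
    using r by (intro mult_left_mono) auto
  moreover have "r - s \<le> r * ln (r / s)"
    using r s by (intro diff_le_mult_ln_div) auto
  moreover have "0 \<le> r * \<bar>ln C\<bar>"
    using r by simp
  ultimately show ?thesis
    using r s unfolding abs_le_iff by linarith
qed (use assms in simp)

lemma kl_div_summable:
  fixes P Q :: "'i \<Rightarrow> real"
  assumes "\<And>i. 0 \<le> P i" and "\<And>i. 0 \<le> Q i" and "0 < C" and "\<And>i. P i \<le> C * Q i"
    and "P summable_on UNIV" and "Q summable_on UNIV"
  shows "(\<lambda>i. P i * ln (P i / Q i)) summable_on UNIV"
proof -
  have "(\<lambda>i. P i * \<bar>ln C\<bar> + P i + Q i) summable_on UNIV"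
    using assms(5,6) by (intro summable_on_add summable_on_cmult_left)
  moreover have "norm (P i * ln (P i / Q i)) \<le> P i * \<bar>ln C\<bar> + P i + Q i" for i
    using abs_mult_ln_div_le[OF assms(1-4)] by simp
  ultimately have "(\<lambda>i. norm (P i * ln (P i / Q i))) summable_on UNIV"
    by (rule Infinite_Sum.abs_summable_on_comparison_test')
  then show ?thesis
    by (rule abs_summable_summable)
qed

lemma kl_div_self [simp]: "kl_div P P = 0"
proof -
  have self_term: "P i * ln (P i / P i) = 0" for i
    by (cases "P i = 0") simp_all
  show ?thesis
    unfolding kl_div_def self_term by simp
qed

context
  fixes P Q :: "'i \<Rightarrow> real"
  assumes P_nonneg: "\<And>i. 0 \<le> P i" and Q_nonneg: "\<And>i. 0 \<le> Q i"
    and P_sum: "(P has_sum 1) UNIV" and Q_sum: "(Q has_sum 1) UNIV"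
    and Q_pos: "\<And>i. 0 < P i \<Longrightarrow> 0 < Q i"
    and kl_summable: "(\<lambda>i. P i * ln (P i / Q i)) summable_on UNIV"
begin

lemma kl_div_has_sum_excess:
  "((\<lambda>i. P i * ln (P i / Q i) - (P i - Q i)) has_sum kl_div P Q) UNIV"
  using has_sum_diff[OF kl_summable[unfolded summable_iff_has_sum_infsum] has_sum_diff[OF P_sum Q_sum]]
  by (simp add: kl_div_def)

lemma kl_div_nonneg: "0 \<le> kl_div P Q"
  by (rule has_sum_nonneg[OF kl_div_has_sum_excess])
     (simp add: diff_le_mult_ln_div(1) P_nonneg Q_nonneg Q_pos)

lemma kl_div_eq_0_imp_eq:
  assumes "kl_div P Q = 0"
  shows "P = Q"
proof
  fix i
  have "P i * ln (P i / Q i) - (P i - Q i) = 0"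
    by (rule nonneg_has_sum_le_0D[OF kl_div_has_sum_excess])
       (simp_all add: assms diff_le_mult_ln_div(1) P_nonneg Q_nonneg Q_pos)
  then show "P i = Q i"
    using diff_le_mult_ln_div(2)[of "P i" "Q i"] P_nonneg Q_nonneg Q_pos by simp
qed

end

lemma kl_div_reindex_scale:
  fixes P Q :: "'i \<Rightarrow> real" and P' Q' :: "'j \<Rightarrow> real"
  assumes "inj g" and "\<And>z. z \<notin> range g \<Longrightarrow> P' z = Q' z"
    and "\<And>i. P' (g i) = s * P i" and "\<And>i. Q' (g i) = s * Q i"
    and "(\<lambda>i. P i * ln (P i / Q i)) summable_on UNIV"
  shows "kl_div P' Q' = s * kl_div P Q"
proof -
  have "((\<lambda>z. P' z * ln (P' z / Q' z)) has_sum s * kl_div P Q) UNIV"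
  proof (rule has_sum_reindex_inj_neutral[where f = "\<lambda>i. s * (P i * ln (P i / Q i))", OF assms(1)])
    show "P' z * ln (P' z / Q' z) = 0" if "z \<notin> range g" for z
      using assms(2)[OF that] by (cases "Q' z = 0") simp_all
    show "P' (g i) * ln (P' (g i) / Q' (g i)) = s * (P i * ln (P i / Q i))" for i
      by (cases "s = 0") (simp_all add: assms(3,4))
    show "((\<lambda>i. s * (P i * ln (P i / Q i))) has_sum s * kl_div P Q) UNIV"
      unfolding kl_div_def using assms(5) by (intro has_sum_cmult_right) simp
  qed
  then show ?thesis
    unfolding kl_div_def by (rule infsumI)
qed

lemma ln_mult_div_split:
  fixes A B QA QB Q :: real
  assumes "0 < A" and "0 < B" and "0 < QA" and "0 < QB" and "0 < Q"
  shows "A * B * ln (A * B / Q)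
    = A * ln (A / QA) * B + B * ln (B / QB) * A - A * B * ln (Q / (QA * QB))"
  using assms by (simp add: ln_div ln_mult algebra_simps)

section \<open>Channels with an input distribution\<close>

lemma channel_nonneg: "channel k \<Longrightarrow> 0 \<le> k x t"
  by (simp add: channel_def)

lemma channel_has_sum: "channel k \<Longrightarrow> (k x has_sum 1) UNIV"
  by (simp add: channel_def)

definition out_dist :: "('a::finite \<Rightarrow> real) \<Rightarrow> ('a \<Rightarrow> 'b \<Rightarrow> real) \<Rightarrow> 'b \<Rightarrow> real" where
  "out_dist w k t = (\<Sum>x\<in>UNIV. w x * k x t)"

definition channel_info :: "('a::finite \<Rightarrow> real) \<Rightarrow> ('a \<Rightarrow> 'b \<Rightarrow> real) \<Rightarrow> real" where
  "channel_info w k = (\<Sum>x\<in>UNIV. w x * kl_div (k x) (out_dist w k))"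

text \<open>Output \<open>0\<close> is the erasure symbol, emitted with probability \<open>1 - s\<close>; otherwise
  the output \<open>t\<close> of \<open>k\<close> is passed on as \<open>t + 1\<close>.\<close>

definition erasure :: "real \<Rightarrow> ('a \<Rightarrow> nat \<Rightarrow> real) \<Rightarrow> 'a \<Rightarrow> nat \<Rightarrow> real" where
  "erasure s k x = case_nat (1 - s) (\<lambda>t. s * k x t)"

definition prod_channel ::
  "('x \<Rightarrow> 'a \<Rightarrow> real) \<Rightarrow> ('y \<Rightarrow> 'b \<Rightarrow> real) \<Rightarrow> 'x \<times> 'y \<Rightarrow> 'a \<times> 'b \<Rightarrow> real" where
  "prod_channel a b = (\<lambda>(x, y) (tx, ty). a x tx * b y ty)"

lemma channel_erasure:
  assumes "channel k" and "0 \<le> s" and "s \<le> 1"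
  shows "channel (erasure s k)"
  unfolding channel_def
proof (intro conjI allI)
  show "0 \<le> erasure s k x t" for x t
    using assms channel_nonneg[OF assms(1)] by (cases t) (simp_all add: erasure_def)
  show "(erasure s k x has_sum 1) UNIV" for x
  proof -
    have "((\<lambda>t. s * k x t) has_sum s * 1) UNIV"
      using channel_has_sum[OF assms(1)] by (rule has_sum_cmult_right)
    from has_sum_case_nat[OF this, of "1 - s"] show ?thesis
      by (simp add: erasure_def)
  qed
qed

lemma channel_prod_channel:
  assumes "channel a" and "channel b"
  shows "channel (prod_channel a b)"
  unfolding channel_def
proof (intro conjI allI)
  show "0 \<le> prod_channel a b u t" for u t
    using channel_nonneg[OF assms(1)] channel_nonneg[OF assms(2)]
    by (simp add: prod_channel_def case_prod_unfold)
  show "(prod_channel a b u has_sum 1) UNIV" for u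
  proof -
    obtain x y where u: "u = (x, y)" by fastforce
    have "((\<lambda>(tx, ty). a x tx * b y ty) has_sum 1) UNIV"
      by (rule has_sum_Sigma_weighted[where W = "\<lambda>_. 1"])
         (simp_all add: channel_nonneg[OF assms(2)] channel_has_sum[OF assms(1)]
            channel_has_sum[OF assms(2)])
    then show ?thesis
      by (simp add: u prod_channel_def)
  qed
qed

locale channel_with_input =
  fixes w :: "'a::finite \<Rightarrow> real" and k :: "'a \<Rightarrow> 'b \<Rightarrow> real"
  assumes w_pos: "\<And>x. 0 < w x" and w_sum: "(\<Sum>x\<in>UNIV. w x) = 1"
    and channel_k: "channel k"
begin

lemma k_nonneg: "0 \<le> k x t"
  using channel_k by (rule channel_nonneg)

lemma out_dist_nonneg: "0 \<le> out_dist w k t"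
  unfolding out_dist_def by (simp add: sum_nonneg w_pos less_imp_le k_nonneg)

lemma out_dist_has_sum: "(out_dist w k has_sum 1) UNIV"
proof -
  have "((\<lambda>t. w x * k x t) has_sum w x * 1) UNIV" for x
    using channel_has_sum[OF channel_k] by (rule has_sum_cmult_right)
  then have "((\<lambda>t. \<Sum>x\<in>UNIV. w x * k x t) has_sum (\<Sum>x\<in>UNIV. w x * 1)) UNIV"
    by (simp add: has_sum_sum)
  then show ?thesis
    by (simp add: out_dist_def[abs_def] w_sum)
qed

lemma mult_le_out_dist: "w x * k x t \<le> out_dist w k t"
  unfolding out_dist_def by (rule member_le_sum) (simp_all add: w_pos less_imp_le k_nonneg)

lemma out_dist_pos: "0 < k x t \<Longrightarrow> 0 < out_dist w k t"
  using mult_le_out_dist[of x t] w_pos[of x] by (smt (verit) mult_pos_pos)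

lemma kl_div_row_summable: "(\<lambda>t. k x t * ln (k x t / out_dist w k t)) summable_on UNIV"
proof (rule kl_div_summable[where C = "1 / w x"])
  show "k x t \<le> 1 / w x * out_dist w k t" for t
    using mult_le_out_dist[of x t] w_pos[of x] by (simp add: field_simps)
qed (simp_all add: k_nonneg out_dist_nonneg w_pos has_sum_imp_summable[OF out_dist_has_sum]
       has_sum_imp_summable[OF channel_has_sum[OF channel_k]])

lemma kl_div_row_nonneg: "0 \<le> kl_div (k x) (out_dist w k)"
  by (rule kl_div_nonneg)
     (simp_all add: k_nonneg out_dist_nonneg channel_has_sum[OF channel_k] out_dist_has_sum
        out_dist_pos kl_div_row_summable)

lemma channel_info_nonneg: "0 \<le> channel_info w k"
  unfolding channel_info_def by (simp add: sum_nonneg w_pos less_imp_le kl_div_row_nonneg)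

lemma channel_info_eq_0_imp_const:
  assumes "channel_info w k = 0"
  shows "k x = out_dist w k"
proof -
  have "w x * kl_div (k x) (out_dist w k) = 0"
    using assms by (simp add: channel_info_def sum_nonneg_eq_0_iff w_pos less_imp_le kl_div_row_nonneg)
  then have "kl_div (k x) (out_dist w k) = 0"
    using w_pos[of x] by simp
  then show ?thesis
    by (rule kl_div_eq_0_imp_eq[rotated -1])
       (simp_all add: k_nonneg out_dist_nonneg channel_has_sum[OF channel_k] out_dist_has_sum
          out_dist_pos kl_div_row_summable)
qed

lemma mutual_info_eq_channel_info: "mutual_info (\<lambda>x t. w x * k x t) = channel_info w k"
proof -
  have w_ne: "w x \<noteq> 0" for x
    using w_pos[of x] by simp
  have marg1: "marg1 (\<lambda>x t. w x * k x t) x = w x" for x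
    unfolding marg1_def
    using has_sum_cmult_right[OF channel_has_sum[OF channel_k], of "w x" x] by (simp add: infsumI)
  have marg2: "marg2 (\<lambda>x t. w x * k x t) t = out_dist w k t" for t
    by (simp add: marg2_def out_dist_def)
  have "((\<lambda>(x, t). w x * (k x t * ln (k x t / out_dist w k t))) has_sum channel_info w k) UNIV"
    unfolding channel_info_def kl_div_def
    by (rule has_sum_Sigma_finite) (simp add: has_sum_cmult_right kl_div_row_summable)
  then show ?thesis
    unfolding mutual_info_def marg1 marg2 by (simp add: w_ne mult.assoc infsumI)
qed

end

lemma out_dist_erasure:
  assumes "(\<Sum>x\<in>UNIV. w x) = 1"
  shows "out_dist w (erasure s k) = case_nat (1 - s) (\<lambda>t. s * out_dist w k t)"
proof
  fix n
  show "out_dist w (erasure s k) n = case_nat (1 - s) (\<lambda>t. s * out_dist w k t) n"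
  proof (cases n)
    case 0
    then show ?thesis
      using assms by (simp add: out_dist_def erasure_def sum_distrib_right[symmetric])
  next
    case (Suc t)
    then show ?thesis
      by (simp add: out_dist_def erasure_def sum_distrib_left mult.left_commute)
  qed
qed

lemma channel_info_erasure:
  fixes k :: "'a::finite \<Rightarrow> nat \<Rightarrow> real"
  assumes "channel_with_input w k"
  shows "channel_info w (erasure s k) = s * channel_info w k"
proof -
  interpret channel_with_input w k by (fact assms)
  have "kl_div (erasure s k x) (out_dist w (erasure s k)) = s * kl_div (k x) (out_dist w k)" for x
  proof (rule kl_div_reindex_scale[where g = Suc])
    show "erasure s k x z = out_dist w (erasure s k) z" if "z \<notin> range Suc" for z
      using that w_sum by (cases z) (simp_all add: erasure_def out_dist_erasure)
  qed (simp_all add: erasure_def out_dist_erasure w_sum kl_div_row_summable)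
  then show ?thesis
    unfolding channel_info_def by (simp add: sum_distrib_left mult.left_commute)
qed

section \<open>Split channels\<close>

lemma sum_UNIV_prod:
  fixes f :: "'a::finite \<times> 'b::finite \<Rightarrow> 'c::comm_monoid_add"
  shows "(\<Sum>u\<in>UNIV. f u) = (\<Sum>x\<in>UNIV. \<Sum>y\<in>UNIV. f (x, y))"
  by (simp add: sum.cartesian_product)

lemma finite_pos_dominates:
  fixes f g :: "'a::finite \<Rightarrow> real"
  assumes f_pos: "\<And>u. 0 < f u"
  shows "\<exists>C>0. \<forall>u. g u \<le> C * f u"
proof (intro exI conjI allI)
  define C where "C = 1 + (\<Sum>u\<in>UNIV. \<bar>g u\<bar> / f u)"
  have ratio_le: "\<bar>g u\<bar> / f u \<le> C - 1" for u
    unfolding C_def by (simp, rule member_le_sum) (simp_all add: f_pos less_imp_le)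
  have "0 \<le> (\<Sum>u\<in>UNIV. \<bar>g u\<bar> / f u)"
    by (simp add: sum_nonneg f_pos less_imp_le)
  then show "0 < C"
    unfolding C_def by linarith
  show "g u \<le> C * f u" for u
  proof -
    have "g u \<le> \<bar>g u\<bar> / f u * f u"
      using f_pos[of u] by simp
    also have "\<dots> \<le> C * f u"
      using ratio_le[of u] f_pos[of u] by (intro mult_right_mono) auto
    finally show ?thesis .
  qed
qed

lemma marg1_finite: "marg1 r x = (\<Sum>y\<in>UNIV. r x y)" for r :: "'x \<Rightarrow> 'y::finite \<Rightarrow> real"
  by (simp add: marg1_def)

lemma marg2_finite: "marg2 r y = (\<Sum>x\<in>UNIV. r x y)" for r :: "'x::finite \<Rightarrow> 'y \<Rightarrow> real"
  by (simp add: marg2_def)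

lemma push_split_indep:
  "push_split (\<lambda>x y. f x * g y) a b t = out_dist f a (fst t) * out_dist g b (snd t)"
  by (cases t) (simp add: push_split_def out_dist_def sum_product mult_ac)

lemma push_split_fst_const:
  fixes r :: "'x::finite \<Rightarrow> 'y::finite \<Rightarrow> real"
  assumes "\<And>x. a x tx = c"
  shows "push_split r a b (tx, ty) = c * out_dist (marg2 r) b ty"
proof -
  have "push_split r a b (tx, ty) = (\<Sum>x\<in>UNIV. \<Sum>y\<in>UNIV. c * (b y ty * r x y))"
    using assms by (simp add: push_split_def mult.assoc)
  also have "\<dots> = (\<Sum>y\<in>UNIV. \<Sum>x\<in>UNIV. c * (b y ty * r x y))"
    by (rule sum.swap)
  also have "\<dots> = c * out_dist (marg2 r) b ty"
    by (simp add: out_dist_def marg2_finite sum_distrib_left sum_distrib_right mult_ac)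
  finally show ?thesis .
qed

lemma push_split_erasure:
  fixes r :: "'x::finite \<Rightarrow> 'y::finite \<Rightarrow> real"
  shows "push_split r (erasure s a) b (tx, ty)
    = (case tx of 0 \<Rightarrow> (1 - s) * out_dist (marg2 r) b ty | Suc n \<Rightarrow> s * push_split r a b (n, ty))"
proof (cases tx)
  case 0
  then show ?thesis
    by (simp add: push_split_fst_const erasure_def)
next
  case (Suc n)
  then show ?thesis
    by (simp add: push_split_def erasure_def sum_distrib_left mult_ac)
qed

lemma push_split_has_sum_snd:
  fixes r :: "'x::finite \<Rightarrow> 'y::finite \<Rightarrow> real"
  assumes "channel b"
  shows "((\<lambda>ty. push_split r a b (tx, ty)) has_sum out_dist (marg1 r) a tx) UNIV"
proof -
  have "((\<lambda>ty. b y ty * (a x tx * r x y)) has_sum 1 * (a x tx * r x y)) UNIV" for x y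
    using channel_has_sum[OF assms] by (rule has_sum_cmult_left)
  then have "((\<lambda>ty. \<Sum>x\<in>UNIV. \<Sum>y\<in>UNIV. b y ty * (a x tx * r x y))
      has_sum (\<Sum>x\<in>UNIV. \<Sum>y\<in>UNIV. 1 * (a x tx * r x y))) UNIV"
    by (simp add: has_sum_sum)
  then show ?thesis
    by (simp add: push_split_def out_dist_def marg1_finite sum_distrib_left sum_distrib_right mult_ac)
qed

lemma push_split_has_sum_fst:
  fixes r :: "'x::finite \<Rightarrow> 'y::finite \<Rightarrow> real"
  assumes "channel a"
  shows "((\<lambda>tx. push_split r a b (tx, ty)) has_sum out_dist (marg2 r) b ty) UNIV"
proof -
  have "((\<lambda>tx. a x tx * (b y ty * r x y)) has_sum 1 * (b y ty * r x y)) UNIV" for x y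
    using channel_has_sum[OF assms] by (rule has_sum_cmult_left)
  then have "((\<lambda>tx. \<Sum>x\<in>UNIV. \<Sum>y\<in>UNIV. a x tx * (b y ty * r x y))
      has_sum (\<Sum>x\<in>UNIV. \<Sum>y\<in>UNIV. b y ty * r x y)) UNIV"
    by (simp add: has_sum_sum)
  moreover have "(\<Sum>x\<in>UNIV. \<Sum>y\<in>UNIV. b y ty * r x y) = out_dist (marg2 r) b ty"
    unfolding out_dist_def marg2_finite sum_distrib_right
    by (subst sum.swap) (simp add: mult.commute)
  ultimately show ?thesis
    by (simp add: push_split_def mult_ac)
qed

locale full_support_joint =
  fixes p :: "'x::finite \<Rightarrow> 'y::finite \<Rightarrow> real"
  assumes p_pos: "\<And>x y. 0 < p x y" and p_sum: "(\<Sum>x\<in>UNIV. \<Sum>y\<in>UNIV. p x y) = 1"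
begin

lemma marg1_pos: "0 < marg1 p x"
  unfolding marg1_finite by (rule sum_pos) (simp_all add: p_pos)

lemma marg2_pos: "0 < marg2 p y"
  unfolding marg2_finite by (rule sum_pos) (simp_all add: p_pos)

lemma sum_marg1: "(\<Sum>x\<in>UNIV. marg1 p x) = 1"
  using p_sum by (simp add: marg1_finite)

lemma sum_marg2: "(\<Sum>y\<in>UNIV. marg2 p y) = 1"
  using p_sum sum.swap[of "\<lambda>x y. p x y" UNIV UNIV] by (simp add: marg2_finite)

lemma marg2_indep: "marg2 (\<lambda>x y. marg1 p x * marg2 p y) = marg2 p"
  using sum_marg1
  by (simp add: fun_eq_iff marg2_finite[of "\<lambda>x y. marg1 p x * marg2 p y"] sum_distrib_right[symmetric])

lemma dominated_by_indep: "\<exists>C>0. \<forall>x y. p x y \<le> C * (marg1 p x * marg2 p y)"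
proof -
  have "0 < marg1 p (fst u) * marg2 p (snd u)" for u
    by (simp add: marg1_pos marg2_pos)
  then have "\<exists>C>0. \<forall>u. p (fst u) (snd u) \<le> C * (marg1 p (fst u) * marg2 p (snd u))"
    by (rule finite_pos_dominates)
  then show ?thesis
    by simp
qed

end

locale split_channel = full_support_joint p for p :: "'x::finite \<Rightarrow> 'y::finite \<Rightarrow> real" +
  fixes a :: "'x \<Rightarrow> nat \<Rightarrow> real" and b :: "'y \<Rightarrow> nat \<Rightarrow> real"
  assumes channel_a: "channel a" and channel_b: "channel b"
begin

sublocale X: channel_with_input "marg1 p" a
  using marg1_pos sum_marg1 channel_a by unfold_locales

sublocale Y: channel_with_input "marg2 p" b
  using marg2_pos sum_marg2 channel_b by unfold_locales

sublocale XY: channel_with_input "\<lambda>(x, y). p x y" "prod_channel a b"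
proof
  show "0 < (\<lambda>(x, y). p x y) u" for u
    by (simp add: p_pos case_prod_unfold)
  show "(\<Sum>u\<in>UNIV. (\<lambda>(x, y). p x y) u) = 1"
    using p_sum by (simp add: sum_UNIV_prod)
  show "channel (prod_channel a b)"
    using channel_a channel_b by (rule channel_prod_channel)
qed

abbreviation joint_out :: "nat \<times> nat \<Rightarrow> real" where
  "joint_out \<equiv> push_split p a b"

abbreviation indep_out :: "nat \<times> nat \<Rightarrow> real" where
  "indep_out \<equiv> push_split (\<lambda>x y. marg1 p x * marg2 p y) a b"

abbreviation log_ratio :: "nat \<times> nat \<Rightarrow> real" where
  "log_ratio t \<equiv> ln (joint_out t / indep_out t)"

lemma joint_out_eq_out_dist: "joint_out = out_dist (\<lambda>(x, y). p x y) (prod_channel a b)"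
proof
  fix t :: "nat \<times> nat"
  show "joint_out t = out_dist (\<lambda>(x, y). p x y) (prod_channel a b) t"
    by (cases t) (simp add: push_split_def out_dist_def prod_channel_def sum_UNIV_prod mult_ac)
qed

lemma joint_out_nonneg: "0 \<le> joint_out t"
  unfolding joint_out_eq_out_dist by (rule XY.out_dist_nonneg)

lemma indep_out_nonneg: "0 \<le> indep_out t"
  unfolding push_split_indep by (simp add: X.out_dist_nonneg Y.out_dist_nonneg)

lemma joint_out_has_sum: "(joint_out has_sum 1) UNIV"
  unfolding joint_out_eq_out_dist by (rule XY.out_dist_has_sum)

lemma indep_out_has_sum: "(indep_out has_sum 1) UNIV"
proof -
  have "((\<lambda>(tx, ty). out_dist (marg1 p) a tx * out_dist (marg2 p) b ty) has_sum 1) UNIV"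
    by (rule has_sum_Sigma_weighted[where W = "\<lambda>_. 1"])
       (simp_all add: Y.out_dist_nonneg Y.out_dist_has_sum X.out_dist_has_sum)
  then show ?thesis
    by (simp add: push_split_indep[abs_def] case_prod_unfold)
qed

lemma info_TT_eq_kl_div: "info_TT p a b = kl_div joint_out indep_out"
proof -
  have joint: "(\<lambda>tx ty. \<Sum>x\<in>UNIV. \<Sum>y\<in>UNIV. qdist p a b x y tx ty) = (\<lambda>tx ty. joint_out (tx, ty))"
    by (simp add: qdist_def push_split_def mult_ac)
  have marg1: "marg1 (\<lambda>tx ty. joint_out (tx, ty)) = out_dist (marg1 p) a"
    by (rule ext) (simp add: marg1_def infsumI[OF push_split_has_sum_snd[OF channel_b]])
  have marg2: "marg2 (\<lambda>tx ty. joint_out (tx, ty)) = out_dist (marg2 p) b"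
    by (rule ext) (simp add: marg2_def infsumI[OF push_split_has_sum_fst[OF channel_a]])
  show ?thesis
    unfolding info_TT_def mutual_info_def kl_div_def joint marg1 marg2
    by (simp add: push_split_indep case_prod_unfold)
qed

lemma info_TT_summable: "(\<lambda>t. joint_out t * log_ratio t) summable_on UNIV"
proof -
  obtain C where "0 < C" and C: "\<And>x y. p x y \<le> C * (marg1 p x * marg2 p y)"
    using dominated_by_indep by auto
  have "joint_out t \<le> C * indep_out t" for t
  proof (cases t)
    case (Pair tx ty)
    have le: "a x tx * b y ty * p x y \<le> C * (a x tx * b y ty * (marg1 p x * marg2 p y))" for x y
      using mult_left_mono[OF C[of x y], of "a x tx * b y ty"] X.k_nonneg[of x tx] Y.k_nonneg[of y ty]
      by (simp add: mult_ac)
    have "(\<Sum>x\<in>UNIV. \<Sum>y\<in>UNIV. a x tx * b y ty * p x y)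
        \<le> (\<Sum>x\<in>UNIV. \<Sum>y\<in>UNIV. C * (a x tx * b y ty * (marg1 p x * marg2 p y)))"
      by (intro sum_mono le)
    then show ?thesis
      by (simp add: Pair push_split_def sum_distrib_left)
  qed
  then show ?thesis
    by (rule kl_div_summable[OF _ _ \<open>0 < C\<close>, rotated 2])
       (simp_all add: joint_out_nonneg indep_out_nonneg has_sum_imp_summable[OF joint_out_has_sum]
          has_sum_imp_summable[OF indep_out_has_sum])
qed

end

section \<open>The two optimisation problems\<close>

context split_channel
begin

lemma objS_eq: "objS p a b = channel_info (marg1 p) a + channel_info (marg2 p) b"
proof -
  have "(\<Sum>\<^sub>\<infinity>ty. qdist p a b x y tx ty) = p x y * a x tx" for x y tx
    using infsumI[OF has_sum_cmult_right[OF channel_has_sum[OF channel_b, of y], of "p x y * a x tx"]]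
    by (simp add: qdist_def)
  moreover have "(\<Sum>\<^sub>\<infinity>tx. qdist p a b x y tx ty) = p x y * b y ty" for x y ty
    using infsumI[OF has_sum_cmult_right[OF channel_has_sum[OF channel_a, of x], of "p x y * b y ty"]]
    by (simp add: qdist_def mult_ac)
  ultimately show ?thesis
    unfolding objS_def X.mutual_info_eq_channel_info[symmetric] Y.mutual_info_eq_channel_info[symmetric]
    by (simp add: marg1_finite marg2_finite sum_distrib_right)
qed

lemma objA_eq_sum_kl_div:
  "objA p a b = (\<Sum>x\<in>UNIV. \<Sum>y\<in>UNIV. p x y * kl_div (prod_channel a b (x, y)) joint_out)"
proof -
  have qdist_eq: "(\<lambda>(x, y) (tx, ty). qdist p a b x y tx ty)
      = (\<lambda>u t. (\<lambda>(x, y). p x y) u * prod_channel a b u t)"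
    by (simp add: fun_eq_iff qdist_def prod_channel_def mult.assoc)
  show ?thesis
    unfolding objA_def qdist_eq XY.mutual_info_eq_channel_info channel_info_def joint_out_eq_out_dist
    by (simp add: sum_UNIV_prod)
qed

lemma kl_div_prod_channel_term:
  "prod_channel a b (x, y) t * ln (prod_channel a b (x, y) t / joint_out t)
   = a x (fst t) * ln (a x (fst t) / out_dist (marg1 p) a (fst t)) * b y (snd t)
   + b y (snd t) * ln (b y (snd t) / out_dist (marg2 p) b (snd t)) * a x (fst t)
   - prod_channel a b (x, y) t * log_ratio t"
proof (cases t)
  case (Pair tx ty)
  show ?thesis
  proof (cases "a x tx = 0 \<or> b y ty = 0")
    case True
    then show ?thesis by (auto simp: Pair prod_channel_def)
  next
    case False
    then have A: "0 < a x tx" and B: "0 < b y ty"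
      using X.k_nonneg[of x tx] Y.k_nonneg[of y ty] by auto
    have "p x y * (a x tx * b y ty) \<le> joint_out (tx, ty)"
      using XY.mult_le_out_dist[of "(x, y)" "(tx, ty)"] by (simp add: joint_out_eq_out_dist prod_channel_def)
    then have "0 < joint_out (tx, ty)"
      using A B p_pos[of x y] by (smt (verit) mult_pos_pos)
    from ln_mult_div_split[OF A B X.out_dist_pos[OF A] Y.out_dist_pos[OF B] this] show ?thesis
      by (simp add: Pair prod_channel_def push_split_indep)
  qed
qed

lemma cross_summable: "(\<lambda>t. prod_channel a b (x, y) t * log_ratio t) summable_on UNIV"
proof -
  have "(\<lambda>t. 1 / p x y * (joint_out t * log_ratio t)) summable_on UNIV"
    using info_TT_summable by (rule summable_on_cmult_right)
  then have "(\<lambda>t. norm (1 / p x y * (joint_out t * log_ratio t))) summable_on UNIV"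
    by (rule summable_on_iff_abs_summable_on_real[THEN iffD1])
  moreover have "norm (prod_channel a b (x, y) t * log_ratio t)
      \<le> norm (1 / p x y * (joint_out t * log_ratio t))" for t
  proof -
    have "p x y * prod_channel a b (x, y) t \<le> joint_out t"
      using XY.mult_le_out_dist[of "(x, y)" t] by (simp add: joint_out_eq_out_dist)
    then have le: "prod_channel a b (x, y) t \<le> 1 / p x y * joint_out t"
      using p_pos[of x y] by (simp add: field_simps)
    have "norm (prod_channel a b (x, y) t * log_ratio t) = prod_channel a b (x, y) t * \<bar>log_ratio t\<bar>"
      using XY.k_nonneg[of "(x, y)" t] by (simp add: abs_mult)
    also have "\<dots> \<le> 1 / p x y * joint_out t * \<bar>log_ratio t\<bar>"
      using le by (rule mult_right_mono) simp
    also have "\<dots> = norm (1 / p x y * (joint_out t * log_ratio t))"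
      using p_pos[of x y] XY.out_dist_nonneg[of t] by (simp add: joint_out_eq_out_dist abs_mult)
    finally show ?thesis .
  qed
  ultimately have "(\<lambda>t. norm (prod_channel a b (x, y) t * log_ratio t)) summable_on UNIV"
    by (rule Infinite_Sum.abs_summable_on_comparison_test)
  then show ?thesis
    by (rule abs_summable_summable)
qed

lemma kl_div_prod_channel:
  "kl_div (prod_channel a b (x, y)) joint_out
   = kl_div (a x) (out_dist (marg1 p) a) + kl_div (b y) (out_dist (marg2 p) b)
     - (\<Sum>\<^sub>\<infinity>t. prod_channel a b (x, y) t * log_ratio t)"
proof -
  have X_part: "((\<lambda>(tx, ty). a x tx * ln (a x tx / out_dist (marg1 p) a tx) * b y ty)
      has_sum kl_div (a x) (out_dist (marg1 p) a)) UNIV"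
    by (rule has_sum_Sigma_weighted[where W = "\<lambda>_. 1"])
       (simp_all add: Y.k_nonneg channel_has_sum[OF channel_b] kl_div_def X.kl_div_row_summable)
  have "((\<lambda>(ty, tx). b y ty * ln (b y ty / out_dist (marg2 p) b ty) * a x tx)
      has_sum kl_div (b y) (out_dist (marg2 p) b)) UNIV"
    by (rule has_sum_Sigma_weighted[where W = "\<lambda>_. 1"])
       (simp_all add: X.k_nonneg channel_has_sum[OF channel_a] kl_div_def Y.kl_div_row_summable)
  then have Y_part: "((\<lambda>(tx, ty). b y ty * ln (b y ty / out_dist (marg2 p) b ty) * a x tx)
      has_sum kl_div (b y) (out_dist (marg2 p) b)) UNIV"
    using has_sum_swap[where f = "\<lambda>(ty, tx). b y ty * ln (b y ty / out_dist (marg2 p) b ty) * a x tx"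
        and A = UNIV and B = UNIV]
    by simp
  have cross: "((\<lambda>t. prod_channel a b (x, y) t * log_ratio t)
      has_sum (\<Sum>\<^sub>\<infinity>t. prod_channel a b (x, y) t * log_ratio t)) UNIV"
    using cross_summable by simp
  have "((\<lambda>t. prod_channel a b (x, y) t * ln (prod_channel a b (x, y) t / joint_out t)) has_sum
      kl_div (a x) (out_dist (marg1 p) a) + kl_div (b y) (out_dist (marg2 p) b)
      - (\<Sum>\<^sub>\<infinity>t. prod_channel a b (x, y) t * log_ratio t)) UNIV"
    using has_sum_diff[OF has_sum_add[OF X_part Y_part] cross]
    by (simp add: kl_div_prod_channel_term case_prod_unfold)
  then show ?thesis
    by (simp add: kl_div_def[of "prod_channel a b (x, y)"] infsumI)
qed

lemma sum_cross_eq_info_TT: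
  "(\<Sum>x\<in>UNIV. \<Sum>y\<in>UNIV. p x y * (\<Sum>\<^sub>\<infinity>t. prod_channel a b (x, y) t * log_ratio t))
   = info_TT p a b"
proof -
  have "((\<lambda>t. p x y * (prod_channel a b (x, y) t * log_ratio t))
      has_sum p x y * (\<Sum>\<^sub>\<infinity>t. prod_channel a b (x, y) t * log_ratio t)) UNIV" for x y
    by (rule has_sum_cmult_right) (simp add: cross_summable)
  then have "((\<lambda>t. \<Sum>x\<in>UNIV. \<Sum>y\<in>UNIV. p x y * (prod_channel a b (x, y) t * log_ratio t))
      has_sum (\<Sum>x\<in>UNIV. \<Sum>y\<in>UNIV. p x y * (\<Sum>\<^sub>\<infinity>t. prod_channel a b (x, y) t * log_ratio t))) UNIV"
    by (simp add: has_sum_sum)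
  moreover have "(\<lambda>t. \<Sum>x\<in>UNIV. \<Sum>y\<in>UNIV. p x y * (prod_channel a b (x, y) t * log_ratio t))
      = (\<lambda>t. joint_out t * log_ratio t)"
    by (simp add: fun_eq_iff push_split_def prod_channel_def sum_distrib_right mult_ac)
  ultimately have "((\<lambda>t. joint_out t * log_ratio t)
      has_sum (\<Sum>x\<in>UNIV. \<Sum>y\<in>UNIV. p x y * (\<Sum>\<^sub>\<infinity>t. prod_channel a b (x, y) t * log_ratio t))) UNIV"
    by simp
  moreover have "((\<lambda>t. joint_out t * log_ratio t) has_sum info_TT p a b) UNIV"
    using info_TT_summable by (simp add: info_TT_eq_kl_div kl_div_def)
  ultimately show ?thesis
    by (rule has_sum_unique)
qed

lemma objA_eq: "objA p a b = channel_info (marg1 p) a + channel_info (marg2 p) b - info_TT p a b"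
proof -
  have X_sum: "(\<Sum>x\<in>UNIV. \<Sum>y\<in>UNIV. p x y * kl_div (a x) (out_dist (marg1 p) a))
      = channel_info (marg1 p) a"
    by (simp add: channel_info_def marg1_finite sum_distrib_right)
  have Y_sum: "(\<Sum>x\<in>UNIV. \<Sum>y\<in>UNIV. p x y * kl_div (b y) (out_dist (marg2 p) b))
      = channel_info (marg2 p) b"
    unfolding channel_info_def marg2_finite sum_distrib_right by (rule sum.swap)
  show ?thesis
    unfolding objA_eq_sum_kl_div kl_div_prod_channel
      X_sum[symmetric] Y_sum[symmetric] sum_cross_eq_info_TT[symmetric]
    by (simp add: right_diff_distrib distrib_left sum.distrib sum_subtractf)
qed

lemma objS_eq_objA_add_info_TT: "objS p a b = objA p a b + info_TT p a b"
  by (simp add: objS_eq objA_eq)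

lemma feasA_iff_feasS_eq: "feasA p lam a b \<longleftrightarrow> feasS_eq p lam a b"
  by (simp add: feasA_def feasS_eq_def info_TT_eq_kl_div channel_a channel_b)

lemma info_TT_eq_0_if_channel_info_eq_0:
  assumes "channel_info (marg1 p) a = 0"
  shows "info_TT p a b = 0"
proof -
  have "joint_out = indep_out"
  proof
    fix t :: "nat \<times> nat"
    obtain tx ty where t: "t = (tx, ty)" by fastforce
    have "a x tx = out_dist (marg1 p) a tx" for x
      using X.channel_info_eq_0_imp_const[OF assms] by simp
    then show "joint_out t = indep_out t"
      unfolding t by (simp add: push_split_fst_const marg2_indep)
  qed
  then show ?thesis
    by (simp add: info_TT_eq_kl_div)
qed

lemma info_TT_erasure:
  assumes "0 \<le> s" and "s \<le> 1"
  shows "info_TT p (erasure s a) b = s * info_TT p a b"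
proof -
  interpret E: split_channel p "erasure s a" b
    using p_pos p_sum channel_erasure[OF channel_a assms] channel_b by unfold_locales
  let ?shift = "\<lambda>(n :: nat, ty :: nat). (Suc n, ty)"
  show ?thesis
    unfolding info_TT_eq_kl_div E.info_TT_eq_kl_div
  proof (rule kl_div_reindex_scale[where g = ?shift])
    show "inj ?shift"
      by (auto simp: inj_def)
    show "E.joint_out z = E.indep_out z" if "z \<notin> range ?shift" for z
    proof -
      obtain n ty where z: "z = (n, ty)" by fastforce
      have "n = 0"
      proof (rule ccontr)
        assume "n \<noteq> 0"
        then obtain m where "n = Suc m" using not0_implies_Suc by blast
        then have "z \<in> range ?shift" using z by (auto intro: image_eqI[where x = "(m, ty)"])
        then show False using that by contradiction
      qed
      then show ?thesis
        by (simp add: z push_split_erasure marg2_indep)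
    qed
    show "E.joint_out (?shift i) = s * joint_out i" for i
      by (cases i) (simp add: push_split_erasure)
    show "E.indep_out (?shift i) = s * indep_out i" for i
      by (cases i) (simp add: push_split_erasure)
  qed (rule info_TT_summable)
qed

lemma erasure_improves:
  assumes "0 \<le> lam" and "lam < info_TT p a b"
  defines "s \<equiv> lam / info_TT p a b"
  shows "feasS_eq p lam (erasure s a) b" and "objS p (erasure s a) b < objS p a b"
proof -
  have info_pos: "0 < info_TT p a b"
    using assms(1,2) by linarith
  have s: "0 \<le> s" "s < 1"
    using assms(1,2) info_pos by (simp_all add: s_def field_simps)
  interpret E: split_channel p "erasure s a" b
    using p_pos p_sum channel_erasure[OF channel_a s(1)] s(2) channel_b by unfold_locales auto
  have "info_TT p (erasure s a) b = lam"
    using info_TT_erasure[OF s(1)] s(2) info_pos by (simp add: s_def)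
  then show "feasS_eq p lam (erasure s a) b"
    using E.channel_a channel_b by (simp add: feasS_eq_def)
  have "channel_with_input (marg1 p) a"
    using marg1_pos sum_marg1 channel_a by unfold_locales
  then have "channel_info (marg1 p) (erasure s a) = s * channel_info (marg1 p) a"
    by (rule channel_info_erasure)
  moreover have "channel_info (marg1 p) a \<noteq> 0"
    using info_TT_eq_0_if_channel_info_eq_0 info_pos by auto
  then have "0 < channel_info (marg1 p) a"
    using X.channel_info_nonneg by (simp add: less_le)
  ultimately show "objS p (erasure s a) b < objS p a b"
    using E.objS_eq objS_eq mult_strict_right_mono[OF s(2)] by simp
qed

end

context full_support_joint
begin

lemma split_channelI: "channel a \<Longrightarrow> channel b \<Longrightarrow> split_channel p a b"
  using p_pos p_sum by unfold_locales

lemma feasA_eq_feasS_eq: "feasA p lam = feasS_eq p lam"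
proof (intro ext)
  fix a b
  show "feasA p lam a b = feasS_eq p lam a b"
  proof (cases "channel a \<and> channel b")
    case True
    then interpret split_channel p a b
      by (auto intro: split_channelI)
    show ?thesis
      by (rule feasA_iff_feasS_eq)
  qed (auto simp: feasA_def feasS_eq_def)
qed

lemma objS_eq_objA_add:
  assumes "feasS_eq p lam a b"
  shows "objS p a b = objA p a b + lam"
proof -
  interpret split_channel p a b
    using assms by (auto simp: feasS_eq_def intro: split_channelI)
  show ?thesis
    using assms objS_eq_objA_add_info_TT by (simp add: feasS_eq_def)
qed

lemma feasS_ge_improvable:
  assumes "0 \<le> lam" and "feasS_ge p lam a b" and "\<not> feasS_eq p lam a b"
  shows "\<exists>a'. feasS_eq p lam a' b \<and> objS p a' b < objS p a b"
proof -
  interpret split_channel p a b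
    using assms(2) by (auto simp: feasS_ge_def intro: split_channelI)
  have "lam < info_TT p a b"
    using assms(2,3) channel_a channel_b by (auto simp: feasS_ge_def feasS_eq_def)
  then show ?thesis
    using erasure_improves[OF assms(1)] by blast
qed

end

lemma is_solution_restrict:
  assumes sub: "\<And>a b. F a b \<Longrightarrow> G a b"
    and improve: "\<And>a b. G a b \<Longrightarrow> \<not> F a b \<Longrightarrow> \<exists>a' b'. F a' b' \<and> obj a' b' < obj a b"
  shows "is_solution G obj a b \<longleftrightarrow> is_solution F obj a b"
proof
  assume sol: "is_solution G obj a b"
  have "F a b"
  proof (rule ccontr)
    assume "\<not> F a b"
    then obtain a' b' where "F a' b'" and "obj a' b' < obj a b"
      using improve[of a b] sol by (auto simp: is_solution_def)
    then show False
      using sub sol by (fastforce simp: is_solution_def)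
  qed
  then show "is_solution F obj a b"
    using sub sol by (simp add: is_solution_def)
next
  assume sol: "is_solution F obj a b"
  have "obj a b \<le> obj a' b'" if G: "G a' b'" for a' b'
  proof (cases "F a' b'")
    case False
    then obtain a'' b'' where "F a'' b''" and "obj a'' b'' < obj a' b'"
      using improve G by blast
    then show ?thesis
      using sol by (fastforce simp: is_solution_def)
  qed (use sol in \<open>simp add: is_solution_def\<close>)
  then show "is_solution G obj a b"
    using sub sol by (simp add: is_solution_def)
qed

lemma is_solution_shift:
  assumes "\<And>a b. F a b \<Longrightarrow> obj' a b = obj a b + c"
  shows "is_solution F obj' a b \<longleftrightarrow> is_solution F obj a b"
  using assms by (auto simp: is_solution_def)

theorem proposition6:
  fixes p :: "'x::finite \<Rightarrow> 'y::finite \<Rightarrow> real" and lam :: real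
  assumes "\<forall>x y. 0 < p x y"
    and "(\<Sum>x\<in>UNIV. \<Sum>y\<in>UNIV. p x y) = 1"
    and "0 \<le> lam" and "lam \<le> mutual_info p"
  shows "(\<forall>kX kY. is_solution (feasS_ge p lam) (objS p) kX kY
                    \<longleftrightarrow> is_solution (feasS_eq p lam) (objS p) kX kY)
       \<and> (\<forall>kX kY. is_solution (feasA p lam) (objA p) kX kY
                    \<longleftrightarrow> is_solution (feasS_ge p lam) (objS p) kX kY)"
proof -
  interpret full_support_joint p
    using assms(1,2) by unfold_locales auto
  have ge_iff_eq: "is_solution (feasS_ge p lam) (objS p) kX kY
      \<longleftrightarrow> is_solution (feasS_eq p lam) (objS p) kX kY" for kX kY
  proof (rule is_solution_restrict)
    show "feasS_ge p lam a b" if "feasS_eq p lam a b" for a b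
      using that by (simp add: feasS_eq_def feasS_ge_def)
    show "\<exists>a' b'. feasS_eq p lam a' b' \<and> objS p a' b' < objS p a b"
      if "feasS_ge p lam a b" and "\<not> feasS_eq p lam a b" for a b
      using feasS_ge_improvable[OF assms(3) that] by blast
  qed
  have "is_solution (feasA p lam) (objA p) kX kY
      \<longleftrightarrow> is_solution (feasS_eq p lam) (objS p) kX kY" for kX kY
    unfolding feasA_eq_feasS_eq by (rule is_solution_shift[symmetric]) (rule objS_eq_objA_add)
  with ge_iff_eq show ?thesis
    by blast
qed

end
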